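(* Let $\Pi$ be a homogeneous Poisson point process in $\mathbb{R}^2$ of unit intensity. Let $A=(0,0)$, $B=(1,0)$, and let $C$ be the point of $\Pi$ nearest to $(0,0)$. Let $\alpha$ be the interior angle of triangle $ABC$ at $B=(1,0)$ and $\beta$ the interior angle at $A=(0,0)$. Then the joint density of $(\alpha,\beta)$ is \[ 2\exp\!\left[-\pi\frac{\sin(x)^2}{\sin(x+y)^2}\right]\frac{\sin(x)\sin(y)}{\sin(x+y)^3}\quad\text{for } x>0,\ y>0,\ x+y<\pi, \] and $0$ otherwise.
   Context: The triangle $ABC$ so defined is called a staked Poissonian triangle. For $C=(u,v)$ with $v>0$, the angles satisfy $\tan\alpha=v/(1-u)$ and $\tan\beta=v/u$. *)

theory Defs
  imports "HOL-Probability.Probability"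
begin

definition unit_poisson_point_process ::
  "'w measure \<Rightarrow> ('w \<Rightarrow> (real \<times> real) set) \<Rightarrow> bool" where
  "unit_poisson_point_process M Pts \<longleftrightarrow>
     prob_space M \<and>
     (\<forall>\<omega>\<in>space M. \<forall>B. bounded B \<longrightarrow> finite (Pts \<omega> \<inter> B)) \<and>
     (\<forall>B \<in> sets (lborel :: (real \<times> real) measure). bounded B \<longrightarrow>
        (\<lambda>\<omega>. card (Pts \<omega> \<inter> B)) \<in> measurable M (count_space UNIV) \<and>
        (\<forall>k::nat. measure M {\<omega> \<in> space M. card (Pts \<omega> \<inter> B) = k}
            = (measure lborel B) ^ k / fact k * exp (- measure lborel B))) \<and>
     (\<forall>(I :: nat set) (Bs :: nat \<Rightarrow> (real \<times> real) set).
        finite I \<longrightarrow> disjoint_family_on Bs I \<longrightarrow>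
        (\<forall>i\<in>I. Bs i \<in> sets lborel \<and> bounded (Bs i)) \<longrightarrow>
        prob_space.indep_vars M (\<lambda>_. count_space UNIV) (\<lambda>i \<omega>. card (Pts \<omega> \<inter> Bs i)) I)"

text \<open>The point of a set nearest to the origin (when it exists and is unique;
  otherwise an arbitrary fixed default, which only matters on a null event).\<close>

definition nearest_to_origin :: "(real \<times> real) set \<Rightarrow> real \<times> real" where
  "nearest_to_origin P =
     (if \<exists>!c. c \<in> P \<and> (\<forall>p\<in>P. norm c \<le> norm p)
      then (THE c. c \<in> P \<and> (\<forall>p\<in>P. norm c \<le> norm p)) else (0, 0))"

definition vangle :: "real \<times> real \<Rightarrow> real \<times> real \<Rightarrow> real" where
  "vangle u v = arccos ((u \<bullet> v) / (norm u * norm v))"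

definition interior_angle :: "real \<times> real \<Rightarrow> real \<times> real \<Rightarrow> real \<times> real \<Rightarrow> real" where
  "interior_angle P Q R = vangle (Q - P) (R - P)"

end

theory Submission
  imports Defs
begin

text \<open>The nearest point \<open>C\<close> of the process has density \<open>exp (- pi |c|^2)\<close>: it lies in a small set
  \<open>A\<close> at squared distance about \<open>r\<close> from the origin iff the disc of area \<open>pi r\<close> is empty and \<open>A\<close> is
  not, which has probability about \<open>exp (- pi r) |A|\<close>. The pair of angles is a function of \<open>C\<close>
  that is invariant under reflection in the base line; on the upper half plane the law of sines
  inverts it, and the change of variables, done through the cotangents of the two angles, has
  Jacobian \<open>sin x sin y / sin (x + y)^3\<close>. The two half planes give the factor \<open>2\<close>.\<close>

lemma arccos_outside_eq:
  assumes "\<not> \<bar>y\<bar> \<le> 1" and "\<not> \<bar>z\<bar> \<le> 1"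
  shows "arccos y = arccos z"
proof -
  have "\<not> (0 \<le> x \<and> x \<le> pi \<and> cos x = w)" if "\<not> \<bar>w\<bar> \<le> 1" for x w :: real
    using that abs_cos_le_one[of x] by auto
  then have "(\<lambda>x. 0 \<le> x \<and> x \<le> pi \<and> cos x = y) = (\<lambda>x. 0 \<le> x \<and> x \<le> pi \<and> cos x = z)"
    using assms by (auto simp: fun_eq_iff)
  then show ?thesis
    unfolding arccos_def by simp
qed

lemma borel_measurable_arccos [measurable]: "arccos \<in> borel_measurable borel"
proof -
  have cont: "(\<lambda>x. indicator {-1..1} x *\<^sub>R arccos x) \<in> borel_measurable borel"
    by (intro borel_measurable_continuous_on_indicator continuous_on_arccos') auto
  have "arccos = (\<lambda>x. if x \<in> {-1..1} then indicator {-1..1} x *\<^sub>R arccos x else arccos 2)"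
  proof
    show "arccos x = (if x \<in> {-1..1} then indicator {-1..1} x *\<^sub>R arccos x else arccos 2)" for x
      by (cases "x \<in> {-1..1}") (auto intro: arccos_outside_eq)
  qed
  also have "\<dots> \<in> borel_measurable borel"
    using cont by measurable
  finally show ?thesis .
qed

lemma borel_measurable_cot [measurable]: "(cot :: real \<Rightarrow> real) \<in> borel_measurable borel"
  unfolding cot_def by measurable

section \<open>Substitutions in nonnegative integrals\<close>

lemma nn_integral_indicator_conv_integral:
  fixes F :: "real \<Rightarrow> real"
  assumes meas: "(\<lambda>x. indicator S x * F x) \<in> borel_measurable borel"
    and nonneg: "\<And>x. x \<in> S \<Longrightarrow> 0 \<le> F x"
  shows "(\<integral>\<^sup>+x. ennreal (F x) * indicator S x \<partial>lborel) =
     (if F absolutely_integrable_on S then ennreal (integral S F) else \<infinity>)"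
proof -
  define G where "G x = indicator S x * F x" for x
  have G_meas: "G \<in> borel_measurable lborel"
    using meas unfolding G_def by simp
  have G_nonneg: "0 \<le> G x" for x
    using nonneg unfolding G_def by (simp add: indicator_def)
  have "(\<integral>\<^sup>+x. ennreal (F x) * indicator S x \<partial>lborel) = (\<integral>\<^sup>+x. ennreal (G x) \<partial>lborel)"
    by (intro nn_integral_cong) (auto simp: G_def indicator_def)
  moreover have integrable_iff: "F absolutely_integrable_on S \<longleftrightarrow> integrable lborel G"
  proof -
    have "F absolutely_integrable_on S \<longleftrightarrow> integrable lebesgue G"
      unfolding set_integrable_def G_def by simp
    also have "\<dots> \<longleftrightarrow> integrable lborel G"
      using G_meas by (intro integrable_completion) simp
    finally show ?thesis .
  qed
  moreover have "(\<integral>\<^sup>+x. ennreal (G x) \<partial>lborel) = ennreal (integral S F)"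
    if F: "F absolutely_integrable_on S"
  proof -
    have "(\<integral>\<^sup>+x. ennreal (G x) \<partial>lborel) = ennreal (integral\<^sup>L lborel G)"
      using F integrable_iff G_nonneg by (intro nn_integral_eq_integral) auto
    also have "integral\<^sup>L lborel G = integral\<^sup>L lebesgue G"
      using G_meas by (intro integral_completion[symmetric]) simp
    also have "\<dots> = (LINT x:S|lebesgue. F x)"
      unfolding set_lebesgue_integral_def G_def by simp
    also have "\<dots> = integral S F"
      using F by (rule set_lebesgue_integral_eq_integral(2))
    finally show ?thesis .
  qed
  moreover have "(\<integral>\<^sup>+x. ennreal (G x) \<partial>lborel) = \<infinity>" if "\<not> integrable lborel G"
  proof (rule ccontr)
    assume "(\<integral>\<^sup>+x. ennreal (G x) \<partial>lborel) \<noteq> \<infinity>"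
    then have "integrable lborel G"
      using G_meas G_nonneg by (intro integrableI_nonneg) (auto simp: top.not_eq_extremum)
    with that show False ..
  qed
  ultimately show ?thesis
    by auto
qed

lemma nn_integral_substitution:
  fixes g g' h :: "real \<Rightarrow> real"
  assumes S: "S \<in> sets borel" and T: "T \<in> sets borel"
    and deriv: "\<And>x. x \<in> S \<Longrightarrow> (g has_real_derivative g' x) (at x)"
    and bij: "bij_betw g S T"
    and h_meas: "h \<in> borel_measurable borel" and h_nonneg: "\<And>x. 0 \<le> h x"
    and meas: "(\<lambda>x. indicator S x * (\<bar>g' x\<bar> * h (g x))) \<in> borel_measurable borel"
  shows "(\<integral>\<^sup>+x. ennreal (h x) * indicator T x \<partial>lborel) =
         (\<integral>\<^sup>+x. ennreal (\<bar>g' x\<bar> * h (g x)) * indicator S x \<partial>lborel)"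
proof -
  have change: "(\<lambda>x. \<bar>g' x\<bar> * h (g x)) absolutely_integrable_on S \<and>
      integral S (\<lambda>x. \<bar>g' x\<bar> * h (g x)) = b
      \<longleftrightarrow> h absolutely_integrable_on T \<and> integral T h = b" for b
    using has_absolute_integral_change_of_variables_1'[of S g g' h b] S deriv bij
    by (auto simp: has_field_derivative_at_within bij_betw_def)
  have "(\<lambda>x. indicator T x * h x) \<in> borel_measurable borel"
    using T h_meas by measurable
  then have lhs: "(\<integral>\<^sup>+x. ennreal (h x) * indicator T x \<partial>lborel) =
      (if h absolutely_integrable_on T then ennreal (integral T h) else \<infinity>)"
    using h_nonneg by (intro nn_integral_indicator_conv_integral)
  have rhs: "(\<integral>\<^sup>+x. ennreal (\<bar>g' x\<bar> * h (g x)) * indicator S x \<partial>lborel) =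
      (if (\<lambda>x. \<bar>g' x\<bar> * h (g x)) absolutely_integrable_on S
       then ennreal (integral S (\<lambda>x. \<bar>g' x\<bar> * h (g x))) else \<infinity>)"
    using meas h_nonneg by (intro nn_integral_indicator_conv_integral) auto
  show ?thesis
    unfolding lhs rhs
    using change[of "integral T h"] change[of "integral S (\<lambda>x. \<bar>g' x\<bar> * h (g x))"] by auto
qed

lemma nn_integral_inverse_substitution:
  fixes h :: "real \<Rightarrow> real"
  assumes [measurable]: "h \<in> borel_measurable borel" and h_nonneg: "\<And>x. 0 \<le> h x"
  shows "(\<integral>\<^sup>+v. ennreal (h v) * indicator {0<..} v \<partial>lborel) =
         (\<integral>\<^sup>+s. ennreal (h (1 / s) / s^2) * indicator {0<..} s \<partial>lborel)"
proof -
  have "bij_betw inverse {0<..} {0::real<..}"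
    by (rule bij_betwI[of _ _ _ inverse]) auto
  then have "(\<integral>\<^sup>+v. ennreal (h v) * indicator {0<..} v \<partial>lborel) =
       (\<integral>\<^sup>+s. ennreal (\<bar>- (inverse s ^ 2)\<bar> * h (inverse s)) * indicator {0<..} s \<partial>lborel)"
  proof (intro nn_integral_substitution h_nonneg)
    show "(inverse has_real_derivative - (inverse x ^ 2)) (at x)" if "x \<in> {0<..}" for x :: real
      using that DERIV_inverse[of x] by (simp add: numeral_2_eq_2)
  qed auto
  also have "\<dots> = (\<integral>\<^sup>+s. ennreal (h (1 / s) / s^2) * indicator {0<..} s \<partial>lborel)"
    by (intro nn_integral_cong) (auto simp: indicator_def field_simps power2_eq_square)
  finally show ?thesis .
qed

lemma bij_betw_cot: "bij_betw cot {0<..<pi} (UNIV :: real set)"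
proof (rule bij_betwI[of _ _ _ "\<lambda>q. pi/2 - arctan q"])
  show "(\<lambda>q. pi/2 - arctan q) \<in> UNIV \<rightarrow> {0<..<pi}"
  proof
    fix q :: real
    show "pi/2 - arctan q \<in> {0<..<pi}"
      using arctan[of q] by auto
  qed
  show "pi/2 - arctan (cot x) = x" if "x \<in> {0<..<pi}" for x
    using that arctan_tan[of "pi/2 - x"] tan_cot'[of x] by auto
  show "cot (pi/2 - arctan q) = q" for q
    using tan_cot'[of "pi/2 - arctan q"] by (simp add: tan_arctan)
qed auto

lemma nn_integral_cot_substitution:
  fixes h :: "real \<Rightarrow> real"
  assumes [measurable]: "h \<in> borel_measurable borel" and h_nonneg: "\<And>x. 0 \<le> h x"
  shows "(\<integral>\<^sup>+q. ennreal (h q) \<partial>lborel) =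
         (\<integral>\<^sup>+x. ennreal (h (cot x) / (sin x)^2) * indicator {0<..<pi} x \<partial>lborel)"
proof -
  have "(\<integral>\<^sup>+q. ennreal (h q) \<partial>lborel) = (\<integral>\<^sup>+q. ennreal (h q) * indicator UNIV q \<partial>lborel)"
    by simp
  also have "\<dots> = (\<integral>\<^sup>+x. ennreal (\<bar>- inverse ((sin x)\<^sup>2)\<bar> * h (cot x)) * indicator {0<..<pi} x \<partial>lborel)"
    by (intro nn_integral_substitution bij_betw_cot h_nonneg)
      (auto intro!: DERIV_cot simp: sin_gt_zero less_imp_neq[symmetric])
  also have "\<dots> = (\<integral>\<^sup>+x. ennreal (h (cot x) / (sin x)^2) * indicator {0<..<pi} x \<partial>lborel)"
    by (intro nn_integral_cong) (auto simp: indicator_def field_simps)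
  finally show ?thesis .
qed

lemma borel_measurable_lborel_prodI:
  "f \<in> borel_measurable (borel \<Otimes>\<^sub>M borel) \<Longrightarrow> f \<in> borel_measurable (lborel \<Otimes>\<^sub>M lborel)"
  by (simp add: lborel_prod borel_prod)

lemma nn_integral_even:
  fixes g :: "real \<Rightarrow> real"
  assumes [measurable]: "g \<in> borel_measurable borel" and even: "\<And>v. g (- v) = g v"
  shows "(\<integral>\<^sup>+v. ennreal (g v) \<partial>lborel) = 2 * (\<integral>\<^sup>+v. ennreal (g v) * indicator {0<..} v \<partial>lborel)"
proof -
  have "(\<integral>\<^sup>+v. ennreal (g v) \<partial>lborel) =
      (\<integral>\<^sup>+v. ennreal (g v) * indicator {0<..} v + ennreal (g v) * indicator {..<0} v \<partial>lborel)"
  proof (rule nn_integral_cong_AE)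
    show "AE v in lborel. ennreal (g v) = ennreal (g v) * indicator {0<..} v + ennreal (g v) * indicator {..<0} v"
      using AE_lborel_singleton[of 0] by eventually_elim (auto simp: indicator_def)
  qed
  also have "\<dots> = (\<integral>\<^sup>+v. ennreal (g v) * indicator {0<..} v \<partial>lborel) +
      (\<integral>\<^sup>+v. ennreal (g v) * indicator {..<0} v \<partial>lborel)"
    by (rule nn_integral_add) measurable
  also have "(\<integral>\<^sup>+v. ennreal (g v) * indicator {..<0} v \<partial>lborel) =
      ennreal \<bar>-1\<bar> * (\<integral>\<^sup>+v. ennreal (g (0 + (-1) * v)) * indicator {..<0} (0 + (-1) * v) \<partial>lborel)"
    by (rule nn_integral_real_affine) measurable
  also have "\<dots> = (\<integral>\<^sup>+v. ennreal (g v) * indicator {0<..} v \<partial>lborel)"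
    by (simp add: even indicator_def)
  finally show ?thesis
    by (simp add: mult_2)
qed

lemma nn_integral_symmetric_snd:
  fixes G :: "real \<times> real \<Rightarrow> real"
  assumes G_meas: "G \<in> borel_measurable borel"
    and G_sym: "\<And>u v. G (u, - v) = G (u, v)"
  shows "(\<integral>\<^sup>+c. ennreal (G c) \<partial>lborel) = 2 * (\<integral>\<^sup>+c. ennreal (G c) * indicator {c. 0 < snd c} c \<partial>lborel)"
proof -
  have [measurable]: "G \<in> borel_measurable (borel \<Otimes>\<^sub>M borel)"
    using G_meas by (simp add: borel_prod)
  have "(\<integral>\<^sup>+c. ennreal (G c) \<partial>lborel) = (\<integral>\<^sup>+u. \<integral>\<^sup>+v. ennreal (G (u, v)) \<partial>lborel \<partial>lborel)"
    unfolding lborel_prod[symmetric]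
    by (rule lborel.nn_integral_fst[symmetric]) (rule borel_measurable_lborel_prodI, measurable)
  also have "\<dots> = (\<integral>\<^sup>+u. 2 * (\<integral>\<^sup>+v. ennreal (G (u, v)) * indicator {0<..} v \<partial>lborel) \<partial>lborel)"
    using G_sym by (intro nn_integral_cong nn_integral_even) measurable
  also have "\<dots> = 2 * (\<integral>\<^sup>+u. \<integral>\<^sup>+v. ennreal (G (u, v)) * indicator {c. 0 < snd c} (u, v) \<partial>lborel \<partial>lborel)"
    by (simp add: nn_integral_cmult indicator_def)
  also have "(\<integral>\<^sup>+u. \<integral>\<^sup>+v. ennreal (G (u, v)) * indicator {c. 0 < snd c} (u, v) \<partial>lborel \<partial>lborel) =
             (\<integral>\<^sup>+c. ennreal (G c) * indicator {c. 0 < snd c} c \<partial>lborel)"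
    unfolding lborel_prod[symmetric]
    by (rule lborel.nn_integral_fst) (rule borel_measurable_lborel_prodI, measurable)
  finally show ?thesis .
qed

lemma nn_integral_scale_fibre:
  fixes G :: "real \<times> real \<Rightarrow> real"
  assumes [measurable]: "G \<in> borel_measurable (borel \<Otimes>\<^sub>M borel)"
  shows "(\<integral>\<^sup>+u. ennreal (G (u, v)) * indicator {c. 0 < snd c} (u, v) \<partial>lborel) =
    (\<integral>\<^sup>+p. ennreal (v * G (v * p, v)) * indicator {0<..} v \<partial>lborel)"
proof (cases "0 < v")
  case True
  have "(\<integral>\<^sup>+u. ennreal (G (u, v)) * indicator {c. 0 < snd c} (u, v) \<partial>lborel) =
      (\<integral>\<^sup>+u. ennreal (G (u, v)) \<partial>lborel)"
    using True by (intro nn_integral_cong) (simp add: indicator_def)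
  also have "\<dots> = ennreal \<bar>v\<bar> * (\<integral>\<^sup>+p. ennreal (G (0 + v * p, v)) \<partial>lborel)"
    using True by (intro nn_integral_real_affine) measurable
  also have "\<dots> = (\<integral>\<^sup>+p. ennreal \<bar>v\<bar> * ennreal (G (0 + v * p, v)) \<partial>lborel)"
    by (rule nn_integral_cmult[symmetric]) measurable
  also have "\<dots> = (\<integral>\<^sup>+p. ennreal (v * G (v * p, v)) * indicator {0<..} v \<partial>lborel)"
    using True by (intro nn_integral_cong) (simp add: ennreal_mult' indicator_def)
  finally show ?thesis .
qed (simp add: indicator_def)

lemma nn_integral_inverse_fibre:
  fixes G :: "real \<times> real \<Rightarrow> real"
  assumes [measurable]: "G \<in> borel_measurable (borel \<Otimes>\<^sub>M borel)" and G_nonneg: "\<And>c. 0 \<le> G c"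
  shows "(\<integral>\<^sup>+v. ennreal (v * G (v * p, v)) * indicator {0<..} v \<partial>lborel) =
    (\<integral>\<^sup>+q. ennreal (if 0 < p + q then G (p / (p + q), 1 / (p + q)) / (p + q) ^ 3 else 0) \<partial>lborel)"
proof -
  define h where "h v = \<bar>v\<bar> * G (v * p, v)" for v
  define F where "F s = (if 0 < s then G (p / s, 1 / s) / s ^ 3 else 0)" for s :: real
  have h_meas: "h \<in> borel_measurable borel"
    unfolding h_def by measurable
  have F_meas: "F \<in> borel_measurable borel"
    unfolding F_def by measurable
  have "(\<integral>\<^sup>+v. ennreal (v * G (v * p, v)) * indicator {0<..} v \<partial>lborel) =
        (\<integral>\<^sup>+v. ennreal (h v) * indicator {0<..} v \<partial>lborel)"
    by (intro nn_integral_cong) (simp add: h_def indicator_def)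
  also have "\<dots> = (\<integral>\<^sup>+s. ennreal (h (1 / s) / s^2) * indicator {0<..} s \<partial>lborel)"
    using h_meas G_nonneg by (intro nn_integral_inverse_substitution) (auto simp: h_def)
  also have "\<dots> = (\<integral>\<^sup>+s. ennreal (F s) \<partial>lborel)"
    by (intro nn_integral_cong)
      (simp add: h_def F_def indicator_def field_simps power2_eq_square power3_eq_cube)
  also have "\<dots> = ennreal \<bar>1\<bar> * (\<integral>\<^sup>+q. ennreal (F (p + 1 * q)) \<partial>lborel)"
    by (intro nn_integral_real_affine) (use F_meas in measurable)
  finally show ?thesis
    by (simp add: F_def)
qed

text \<open>The coordinates \<open>(p, q) = (u / v, (1 - u) / v)\<close> of a point \<open>(u, v)\<close> of the upper half
  plane are the cotangents of the angles of the triangle \<open>(0,0), (1,0), (u,v)\<close> at the two base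
  vertices.\<close>

lemma nn_integral_upper_half_plane_cot_coords:
  fixes G :: "real \<times> real \<Rightarrow> real"
  assumes G_meas: "G \<in> borel_measurable borel" and G_nonneg: "\<And>c. 0 \<le> G c"
  shows "(\<integral>\<^sup>+c. ennreal (G c) * indicator {c. 0 < snd c} c \<partial>lborel) =
    (\<integral>\<^sup>+p. \<integral>\<^sup>+q. ennreal (if 0 < p + q then G (p / (p + q), 1 / (p + q)) / (p + q) ^ 3 else 0)
      \<partial>lborel \<partial>lborel)"
proof -
  have [measurable]: "G \<in> borel_measurable (borel \<Otimes>\<^sub>M borel)"
    using G_meas by (simp add: borel_prod)
  have "(\<integral>\<^sup>+c. ennreal (G c) * indicator {c. 0 < snd c} c \<partial>lborel) =
        (\<integral>\<^sup>+v. \<integral>\<^sup>+u. ennreal (G (u, v)) * indicator {c. 0 < snd c} (u, v) \<partial>lborel \<partial>lborel)"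
    unfolding lborel_prod[symmetric] by (rule lborel_pair.nn_integral_snd[symmetric]) measurable
  also have "\<dots> = (\<integral>\<^sup>+v. \<integral>\<^sup>+p. ennreal (v * G (v * p, v)) * indicator {0<..} v \<partial>lborel \<partial>lborel)"
    by (intro nn_integral_cong nn_integral_scale_fibre) measurable
  also have "\<dots> = (\<integral>\<^sup>+p. \<integral>\<^sup>+v. ennreal (v * G (v * p, v)) * indicator {0<..} v \<partial>lborel \<partial>lborel)"
    by (rule lborel_pair.Fubini') measurable
  also have "\<dots> = (\<integral>\<^sup>+p. \<integral>\<^sup>+q. ennreal (if 0 < p + q then G (p / (p + q), 1 / (p + q)) / (p + q) ^ 3 else 0)
      \<partial>lborel \<partial>lborel)"
    using G_nonneg by (intro nn_integral_cong nn_integral_inverse_fibre) measurable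
  finally show ?thesis .
qed

section \<open>The law of the nearest point\<close>

definition nearest_density :: "real \<times> real \<Rightarrow> real" where
  "nearest_density c = exp (- pi * (norm c)^2)"

definition nearest_law :: "(real \<times> real) measure" where
  "nearest_law = density lborel (\<lambda>c. ennreal (nearest_density c))"

lemma borel_measurable_nearest_density [measurable]: "nearest_density \<in> borel_measurable borel"
  unfolding nearest_density_def by measurable

lemma nn_integral_exp_neg_pi_sq: "(\<integral>\<^sup>+x. ennreal (exp (- pi * x^2)) \<partial>lborel) = 1"
proof -
  define \<sigma> where "\<sigma> = 1 / sqrt (2 * pi)"
  have \<sigma>_pos: "0 < \<sigma>"
    unfolding \<sigma>_def by simp
  have "\<sigma>^2 = 1 / (2 * pi)"
    unfolding \<sigma>_def by (simp add: power_divide)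
  then have normal: "normal_density 0 \<sigma> x = exp (- pi * x^2)" for x
    unfolding normal_density_def using \<sigma>_pos by (simp add: field_simps)
  interpret prob_space "density lborel (normal_density 0 \<sigma>)"
    using \<sigma>_pos by (rule prob_space_normal_density)
  have "1 = emeasure (density lborel (normal_density 0 \<sigma>)) (space (density lborel (normal_density 0 \<sigma>)))"
    by (rule emeasure_space_1[symmetric])
  also have "\<dots> = (\<integral>\<^sup>+x. ennreal (normal_density 0 \<sigma> x) \<partial>lborel)"
    by (subst emeasure_density) auto
  finally show ?thesis
    unfolding normal by simp
qed

lemma nn_integral_nearest_density: "(\<integral>\<^sup>+c. ennreal (nearest_density c) \<partial>lborel) = 1"
proof -
  have factor: "ennreal (nearest_density (u, v)) = ennreal (exp (- pi * u^2)) * ennreal (exp (- pi * v^2))"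
    for u v
    by (simp add: nearest_density_def norm_Pair ennreal_mult'[symmetric] exp_add[symmetric] algebra_simps)
  have "(\<integral>\<^sup>+c. ennreal (nearest_density c) \<partial>lborel) =
      (\<integral>\<^sup>+u. \<integral>\<^sup>+v. ennreal (nearest_density (u, v)) \<partial>lborel \<partial>lborel)"
    unfolding lborel_prod[symmetric] by (rule lborel.nn_integral_fst[symmetric]) (simp add: lborel_prod)
  also have "\<dots> = (\<integral>\<^sup>+u. ennreal (exp (- pi * u^2)) * (\<integral>\<^sup>+v. ennreal (exp (- pi * v^2)) \<partial>lborel) \<partial>lborel)"
    unfolding factor by (intro nn_integral_cong nn_integral_cmult) measurable
  also have "\<dots> = 1"
    by (simp only: nn_integral_exp_neg_pi_sq mult_1_right)
  finally show ?thesis .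
qed

lemma prob_space_nearest_law: "prob_space nearest_law"
proof
  show "emeasure nearest_law (space nearest_law) = 1"
    unfolding nearest_law_def using nn_integral_nearest_density
    by (subst emeasure_density) (auto simp: nearest_density_def)
qed

lemma sets_nearest_law [simp]: "sets nearest_law = sets borel"
  by (simp add: nearest_law_def)

lemma emeasure_nearest_law_ge:
  assumes S: "S \<in> sets borel" and S_bound: "\<And>c. c \<in> S \<Longrightarrow> (norm c)^2 < b"
  shows "ennreal (exp (- pi * b)) * emeasure lborel S \<le> emeasure nearest_law S"
proof -
  have "ennreal (exp (- pi * b)) * emeasure lborel S =
      (\<integral>\<^sup>+c. ennreal (exp (- pi * b)) * indicator S c \<partial>lborel)"
    using S by (simp add: nn_integral_cmult_indicator)
  also have "\<dots> \<le> (\<integral>\<^sup>+c. ennreal (nearest_density c) * indicator S c \<partial>lborel)"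
  proof (intro nn_integral_mono)
    show "ennreal (exp (- pi * b)) * indicator S c \<le> ennreal (nearest_density c) * indicator S c" for c
      using S_bound[of c] by (cases "c \<in> S") (auto simp: nearest_density_def intro!: ennreal_leI)
  qed
  also have "\<dots> = emeasure nearest_law S"
    unfolding nearest_law_def using S by (subst emeasure_density) auto
  finally show ?thesis .
qed

section \<open>From the nearest point to the angles\<close>

definition angle_domain :: "(real \<times> real) set" where
  "angle_domain = {z. 0 < fst z \<and> 0 < snd z \<and> fst z + snd z < pi}"

text \<open>By the law of sines, the apex of the triangle over \<open>(0,0), (1,0)\<close> with angle \<open>x\<close> at
  \<open>(1,0)\<close> and angle \<open>y\<close> at \<open>(0,0)\<close> has distance \<open>sin x / sin (x + y)\<close> from the origin.\<close>

definition triangle_apex :: "real \<times> real \<Rightarrow> real \<times> real" where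
  "triangle_apex z = (cos (snd z) * sin (fst z) / sin (fst z + snd z),
     sin (fst z) * sin (snd z) / sin (fst z + snd z))"

definition apex_jacobian :: "real \<times> real \<Rightarrow> real" where
  "apex_jacobian z = sin (fst z) * sin (snd z) / sin (fst z + snd z) ^ 3"

lemma cot_coords_kernel_eq:
  fixes G :: "real \<times> real \<Rightarrow> real" and x y :: real
  assumes x: "0 < x" "x < pi" and y: "0 < y" "y < pi"
  shows "(if 0 < cot y + cot x
          then G (cot y / (cot y + cot x), 1 / (cot y + cot x)) / (cot y + cot x) ^ 3 else 0)
           / (sin x)^2 / (sin y)^2
        = (if x + y < pi then G (triangle_apex (x, y)) * apex_jacobian (x, y) else 0)"
proof -
  have sx: "sin x > 0" and sy: "sin y > 0"
    using x y by (auto intro: sin_gt_zero)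
  have sum: "cot y + cot x = sin (x + y) / (sin x * sin y)"
    using sx sy by (simp add: cot_def sin_add field_simps)
  show ?thesis
  proof (cases "x + y < pi")
    case True
    have s: "sin (x + y) > 0"
      using True x y by (intro sin_gt_zero) auto
    have apex: "G (cot y / (cot y + cot x), 1 / (cot y + cot x)) = G (triangle_apex (x, y))"
      using sx sy s unfolding sum by (simp add: triangle_apex_def cot_def field_simps)
    have jacobian: "1 / (cot y + cot x) ^ 3 / (sin x)^2 / (sin y)^2 = apex_jacobian (x, y)"
      using sx sy s unfolding sum
      by (simp add: apex_jacobian_def field_simps power2_eq_square power3_eq_cube)
    have "0 < cot y + cot x"
      using sum s sx sy by simp
    then show ?thesis
      using True by (simp flip: apex jacobian)
  next
    case False
    have "sin (x + y) = - sin (x + y - pi)"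
      by (simp add: sin_diff)
    moreover have "sin (x + y - pi) \<ge> 0"
      using False x y by (intro sin_ge_zero) auto
    ultimately have "sin (x + y) / (sin x * sin y) \<le> 0"
      using sx sy by (intro divide_nonpos_pos) auto
    then have "\<not> 0 < cot y + cot x"
      using sum by simp
    then show ?thesis
      using False by simp
  qed
qed

lemma nn_integral_cot_cot_substitution:
  fixes K :: "real \<Rightarrow> real \<Rightarrow> real"
  assumes K_meas: "(\<lambda>z. K (fst z) (snd z)) \<in> borel_measurable (borel \<Otimes>\<^sub>M borel)"
    and K_nonneg: "\<And>p q. 0 \<le> K p q"
  shows "(\<integral>\<^sup>+p. \<integral>\<^sup>+q. ennreal (K p q) \<partial>lborel \<partial>lborel) =
    (\<integral>\<^sup>+z. ennreal (K (cot (snd z)) (cot (fst z)) / (sin (fst z))^2 / (sin (snd z))^2)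
      * indicator ({0<..<pi} \<times> {0<..<pi}) z \<partial>lborel)"
proof -
  have [measurable (raw)]: "(\<lambda>x. K (f x) (g x)) \<in> borel_measurable N"
    if "f \<in> borel_measurable N" "g \<in> borel_measurable N" for f g :: "'a \<Rightarrow> real" and N
    using measurable_compose[OF measurable_Pair[OF that] K_meas] by simp
  have "(\<integral>\<^sup>+p. \<integral>\<^sup>+q. ennreal (K p q) \<partial>lborel \<partial>lborel)
      = (\<integral>\<^sup>+p. \<integral>\<^sup>+x. ennreal (K p (cot x) / (sin x)^2) * indicator {0<..<pi} x \<partial>lborel \<partial>lborel)"
    using K_nonneg by (intro nn_integral_cong nn_integral_cot_substitution) measurable
  also have "\<dots> = (\<integral>\<^sup>+x. \<integral>\<^sup>+p. ennreal (K p (cot x) / (sin x)^2) * indicator {0<..<pi} x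
      \<partial>lborel \<partial>lborel)"
    by (rule lborel_pair.Fubini'[symmetric], rule borel_measurable_lborel_prodI) measurable
  also have "\<dots> = (\<integral>\<^sup>+x. \<integral>\<^sup>+y. ennreal (K (cot y) (cot x) / (sin x)^2 / (sin y)^2)
      * indicator ({0<..<pi} \<times> {0<..<pi}) (x, y) \<partial>lborel \<partial>lborel)"
  proof (rule nn_integral_cong)
    fix x :: real
    show "(\<integral>\<^sup>+p. ennreal (K p (cot x) / (sin x)^2) * indicator {0<..<pi} x \<partial>lborel) =
        (\<integral>\<^sup>+y. ennreal (K (cot y) (cot x) / (sin x)^2 / (sin y)^2)
          * indicator ({0<..<pi} \<times> {0<..<pi}) (x, y) \<partial>lborel)"
    proof (cases "x \<in> {0<..<pi}")
      case True
      have "(\<integral>\<^sup>+p. ennreal (K p (cot x) / (sin x)^2) * indicator {0<..<pi} x \<partial>lborel)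
          = (\<integral>\<^sup>+p. ennreal (K p (cot x) / (sin x)^2) \<partial>lborel)"
        using True by simp
      also have "\<dots> = (\<integral>\<^sup>+y. ennreal (K (cot y) (cot x) / (sin x)^2 / (sin y)^2)
          * indicator {0<..<pi} y \<partial>lborel)"
        using K_nonneg by (intro nn_integral_cot_substitution) measurable
      finally show ?thesis
        using True by (simp add: indicator_def)
    qed (auto simp: indicator_def)
  qed
  also have "\<dots> = (\<integral>\<^sup>+z. ennreal (K (cot (snd z)) (cot (fst z)) / (sin (fst z))^2 / (sin (snd z))^2)
      * indicator ({0<..<pi} \<times> {0<..<pi}) z \<partial>lborel)"
  proof -
    define W where "W = (\<lambda>z. ennreal (K (cot (snd z)) (cot (fst z)) / (sin (fst z))^2 / (sin (snd z))^2)
      * indicator ({0<..<pi} \<times> {0<..<pi}) z)"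
    have "W \<in> borel_measurable (lborel \<Otimes>\<^sub>M lborel)"
      unfolding W_def by (rule borel_measurable_lborel_prodI) measurable
    from lborel.nn_integral_fst[OF this] show ?thesis
      by (simp add: W_def lborel_prod)
  qed
  finally show ?thesis .
qed

lemma nn_integral_cot_coords_angles:
  fixes G :: "real \<times> real \<Rightarrow> real"
  assumes G_meas: "G \<in> borel_measurable borel" and G_nonneg: "\<And>c. 0 \<le> G c"
  shows "(\<integral>\<^sup>+p. \<integral>\<^sup>+q. ennreal (if 0 < p + q then G (p / (p + q), 1 / (p + q)) / (p + q) ^ 3 else 0)
      \<partial>lborel \<partial>lborel)
    = (\<integral>\<^sup>+z. ennreal (G (triangle_apex z) * apex_jacobian z) * indicator angle_domain z \<partial>lborel)"
proof -
  have [measurable]: "G \<in> borel_measurable (borel \<Otimes>\<^sub>M borel)"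
    using G_meas by (simp add: borel_prod)
  define K where "K p q = (if 0 < p + q then G (p / (p + q), 1 / (p + q)) / (p + q) ^ 3 else 0)"
    for p q :: real
  have "(\<lambda>z. K (fst z) (snd z)) \<in> borel_measurable (borel \<Otimes>\<^sub>M borel)"
    unfolding K_def by measurable
  moreover have "0 \<le> K p q" for p q
    unfolding K_def using G_nonneg by simp
  ultimately have "(\<integral>\<^sup>+p. \<integral>\<^sup>+q. ennreal (K p q) \<partial>lborel \<partial>lborel) =
    (\<integral>\<^sup>+z. ennreal (K (cot (snd z)) (cot (fst z)) / (sin (fst z))^2 / (sin (snd z))^2)
      * indicator ({0<..<pi} \<times> {0<..<pi}) z \<partial>lborel)"
    by (rule nn_integral_cot_cot_substitution)
  also have "\<dots> = (\<integral>\<^sup>+z. ennreal (G (triangle_apex z) * apex_jacobian z) * indicator angle_domain z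
      \<partial>lborel)"
  proof (rule nn_integral_cong)
    fix z :: "real \<times> real"
    obtain x y where z: "z = (x, y)"
      by (cases z)
    show "ennreal (K (cot (snd z)) (cot (fst z)) / (sin (fst z))^2 / (sin (snd z))^2)
        * indicator ({0<..<pi} \<times> {0<..<pi}) z =
      ennreal (G (triangle_apex z) * apex_jacobian z) * indicator angle_domain z"
    proof (cases "x \<in> {0<..<pi} \<and> y \<in> {0<..<pi}")
      case True
      then have "K (cot y) (cot x) / (sin x)^2 / (sin y)^2 =
          (if x + y < pi then G (triangle_apex (x, y)) * apex_jacobian (x, y) else 0)"
        unfolding K_def by (intro cot_coords_kernel_eq) auto
      then show ?thesis
        using True z by (auto simp: angle_domain_def indicator_def)
    qed (use z in \<open>auto simp: angle_domain_def indicator_def\<close>)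
  qed
  finally show ?thesis
    unfolding K_def .
qed

lemma nn_integral_upper_half_plane_angles:
  fixes G :: "real \<times> real \<Rightarrow> real"
  assumes "G \<in> borel_measurable borel" and "\<And>c. 0 \<le> G c"
  shows "(\<integral>\<^sup>+c. ennreal (G c) * indicator {c. 0 < snd c} c \<partial>lborel) =
    (\<integral>\<^sup>+z. ennreal (G (triangle_apex z) * apex_jacobian z) * indicator angle_domain z \<partial>lborel)"
  using nn_integral_upper_half_plane_cot_coords[OF assms] nn_integral_cot_coords_angles[OF assms]
  by simp

lemma polar_norm_sq: "(cos t * a)^2 + (sin t * a)^2 = (a :: real)^2"
  by (simp add: power_mult_distrib flip: distrib_right)

lemma triangle_apex_sides:
  fixes x y :: real
  assumes "0 < x" "0 < y" "x + y < pi"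
  shows "sqrt (fst (triangle_apex (x, y)) ^ 2 + snd (triangle_apex (x, y)) ^ 2) = sin x / sin (x + y)"
    and "sqrt ((1 - fst (triangle_apex (x, y))) ^ 2 + snd (triangle_apex (x, y)) ^ 2) = sin y / sin (x + y)"
    and "1 - fst (triangle_apex (x, y)) = cos x * (sin y / sin (x + y))"
proof -
  have sx: "sin x > 0" and sy: "sin y > 0" and s: "sin (x + y) > 0"
    using assms by (auto intro: sin_gt_zero)
  have u: "fst (triangle_apex (x, y)) = cos y * (sin x / sin (x + y))"
    and v: "snd (triangle_apex (x, y)) = sin y * (sin x / sin (x + y))"
    by (simp_all add: triangle_apex_def)
  show u': "1 - fst (triangle_apex (x, y)) = cos x * (sin y / sin (x + y))"
    unfolding u using s by (simp add: field_simps sin_add)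
  have v': "snd (triangle_apex (x, y)) = sin x * (sin y / sin (x + y))"
    unfolding v by simp
  show "sqrt (fst (triangle_apex (x, y)) ^ 2 + snd (triangle_apex (x, y)) ^ 2) = sin x / sin (x + y)"
    unfolding u v polar_norm_sq using sx s by simp
  show "sqrt ((1 - fst (triangle_apex (x, y))) ^ 2 + snd (triangle_apex (x, y)) ^ 2) = sin y / sin (x + y)"
    unfolding u' v' polar_norm_sq using sy s by simp
qed

definition staked_angles :: "real \<times> real \<Rightarrow> real \<times> real" where
  "staked_angles c = (interior_angle (1, 0) (0, 0) c, interior_angle (0, 0) (1, 0) c)"

lemma staked_angles_eq:
  "staked_angles c = (arccos ((1 - fst c) / sqrt ((1 - fst c)^2 + (snd c)^2)),
    arccos (fst c / sqrt ((fst c)^2 + (snd c)^2)))"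
proof (cases c)
  case (Pair u v)
  have "norm ((u, v) - (1, 0)) = sqrt ((1 - u)^2 + v^2)"
    by (simp add: norm_Pair power2_eq_square algebra_simps)
  then show ?thesis
    using Pair by (simp add: staked_angles_def interior_angle_def vangle_def norm_Pair)
qed

lemma borel_measurable_staked_angles [measurable]: "staked_angles \<in> borel_measurable borel"
  unfolding staked_angles_eq[abs_def] borel_prod[symmetric] by measurable

lemma staked_angles_reflect: "staked_angles (u, - v) = staked_angles (u, v)"
  by (simp add: staked_angles_eq)

lemma staked_angles_triangle_apex:
  assumes "z \<in> angle_domain"
  shows "staked_angles (triangle_apex z) = z"
proof (cases z)
  case (Pair x y)
  then have xy: "0 < x" "0 < y" "x + y < pi"
    using assms by (auto simp: angle_domain_def)
  have "sin x > 0" "sin y > 0" "sin (x + y) > 0"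
    using xy by (auto intro: sin_gt_zero)
  then have "(1 - fst (triangle_apex (x, y))) /
        sqrt ((1 - fst (triangle_apex (x, y)))^2 + (snd (triangle_apex (x, y)))^2) = cos x"
    and "fst (triangle_apex (x, y)) /
        sqrt ((fst (triangle_apex (x, y)))^2 + (snd (triangle_apex (x, y)))^2) = cos y"
    using triangle_apex_sides[OF xy] by (simp_all add: triangle_apex_def)
  then show ?thesis
    unfolding staked_angles_eq Pair using xy by (simp add: arccos_cos)
qed

definition angle_density :: "real \<times> real \<Rightarrow> real" where
  "angle_density = (\<lambda>(x, y). if 0 < x \<and> 0 < y \<and> x + y < pi
     then 2 * exp (- pi * (sin x ^ 2 / sin (x + y) ^ 2)) * (sin x * sin y / sin (x + y) ^ 3)
     else 0)"

lemma borel_measurable_angle_density [measurable]: "angle_density \<in> borel_measurable borel"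
  unfolding angle_density_def case_prod_beta borel_prod[symmetric] by measurable

lemma nearest_density_reflect: "nearest_density (u, - v) = nearest_density (u, v)"
  by (simp add: nearest_density_def norm_Pair)

lemma nearest_density_triangle_apex:
  assumes "z \<in> angle_domain"
  shows "2 * nearest_density (triangle_apex z) * apex_jacobian z = angle_density z"
proof (cases z)
  case (Pair x y)
  then have xy: "0 < x" "0 < y" "x + y < pi"
    using assms by (auto simp: angle_domain_def)
  have "norm (triangle_apex (x, y)) = sin x / sin (x + y)"
    using triangle_apex_sides(1)[OF xy] by (metis norm_Pair prod.collapse real_norm_def power2_abs)
  then show ?thesis
    using xy Pair by (simp add: nearest_density_def angle_density_def apex_jacobian_def power_divide)
qed

lemma staked_angles_density_pointwise:
  fixes z :: "real \<times> real" and A :: "(real \<times> real) set"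
  defines "G \<equiv> \<lambda>c. nearest_density c * indicator A (staked_angles c)"
  shows "2 * (ennreal (G (triangle_apex z) * apex_jacobian z) * indicator angle_domain z) =
    ennreal (angle_density z) * indicator A z"
proof (cases "z \<in> angle_domain")
  case True
  have "2 * ennreal (G (triangle_apex z) * apex_jacobian z) =
      ennreal (2 * (G (triangle_apex z) * apex_jacobian z))"
    by (subst ennreal_mult') auto
  also have "2 * (G (triangle_apex z) * apex_jacobian z) = angle_density z * indicator A z"
    using nearest_density_triangle_apex[OF True] staked_angles_triangle_apex[OF True]
    by (simp add: G_def indicator_def)
  finally show ?thesis
    using True by (simp add: indicator_def)
next
  case False
  then have "angle_density z = 0"
    by (cases z) (auto simp: angle_domain_def angle_density_def)
  then show ?thesis
    using False by simp
qed

lemma nn_integral_nearest_density_staked_angles: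
  assumes A: "A \<in> sets borel"
  shows "(\<integral>\<^sup>+c. ennreal (nearest_density c) * indicator (staked_angles -` A) c \<partial>lborel) =
    (\<integral>\<^sup>+z. ennreal (angle_density z) * indicator A z \<partial>lborel)"
proof -
  define G where "G c = nearest_density c * indicator A (staked_angles c)" for c
  have G_meas: "G \<in> borel_measurable borel"
    unfolding G_def using A by measurable
  have G_nonneg: "0 \<le> G c" for c
    by (simp add: G_def nearest_density_def)
  have "(\<integral>\<^sup>+c. ennreal (nearest_density c) * indicator (staked_angles -` A) c \<partial>lborel) =
      (\<integral>\<^sup>+c. ennreal (G c) \<partial>lborel)"
    by (intro nn_integral_cong) (simp add: G_def indicator_def)
  also have "\<dots> = 2 * (\<integral>\<^sup>+c. ennreal (G c) * indicator {c. 0 < snd c} c \<partial>lborel)"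
    using G_meas
    by (rule nn_integral_symmetric_snd) (simp add: G_def staked_angles_reflect nearest_density_reflect)
  also have "\<dots> = 2 * (\<integral>\<^sup>+z. ennreal (G (triangle_apex z) * apex_jacobian z) * indicator angle_domain z
      \<partial>lborel)"
    using G_meas G_nonneg by (simp add: nn_integral_upper_half_plane_angles)
  also have "\<dots> = (\<integral>\<^sup>+z. 2 * (ennreal (G (triangle_apex z) * apex_jacobian z) * indicator angle_domain z)
      \<partial>lborel)"
  proof (rule nn_integral_cmult[symmetric])
    show "(\<lambda>z. ennreal (G (triangle_apex z) * apex_jacobian z) * indicator angle_domain z)
        \<in> borel_measurable lborel"
      using G_meas unfolding triangle_apex_def apex_jacobian_def angle_domain_def
      by (simp add: borel_prod[symmetric]) measurable
  qed
  also have "\<dots> = (\<integral>\<^sup>+z. ennreal (angle_density z) * indicator A z \<partial>lborel)"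
    unfolding G_def by (intro nn_integral_cong staked_angles_density_pointwise)
  finally show ?thesis .
qed

lemma distr_nearest_law_staked_angles:
  "distr nearest_law lborel staked_angles = density lborel (\<lambda>z. ennreal (angle_density z))"
proof (rule measure_eqI)
  fix A assume "A \<in> sets (distr nearest_law lborel staked_angles)"
  then have A: "A \<in> sets borel"
    by simp
  have "emeasure (distr nearest_law lborel staked_angles) A =
      (\<integral>\<^sup>+c. ennreal (nearest_density c) * indicator (staked_angles -` A) c \<partial>lborel)"
    using A by (simp add: nearest_law_def emeasure_distr)
      (subst emeasure_density, auto intro: measurable_sets_borel[OF borel_measurable_staked_angles])
  also have "\<dots> = emeasure (density lborel (\<lambda>z. ennreal (angle_density z))) A"
    using A by (simp add: nn_integral_nearest_density_staked_angles emeasure_density)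
  finally show "emeasure (distr nearest_law lborel staked_angles) A =
      emeasure (density lborel (\<lambda>z. ennreal (angle_density z))) A" .
qed (simp add: nearest_law_def)

section \<open>Nearest points of locally finite sets\<close>

definition has_unique_nearest :: "(real \<times> real) set \<Rightarrow> bool" where
  "has_unique_nearest P \<longleftrightarrow> (\<exists>!c. c \<in> P \<and> (\<forall>p\<in>P. norm c \<le> norm p))"

lemma nearest_to_origin_eqI:
  assumes "c \<in> P" "\<And>p. p \<in> P \<Longrightarrow> norm c \<le> norm p"
    and "\<And>c'. c' \<in> P \<Longrightarrow> norm c' \<le> norm c \<Longrightarrow> c' = c"
  shows "has_unique_nearest P" "nearest_to_origin P = c"
proof -
  have c: "c \<in> P \<and> (\<forall>p\<in>P. norm c \<le> norm p)"
    using assms by blast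
  moreover have unique: "c' = c" if "c' \<in> P \<and> (\<forall>p\<in>P. norm c' \<le> norm p)" for c'
    using that assms by blast
  ultimately show "has_unique_nearest P"
    unfolding has_unique_nearest_def by blast
  have "(THE c. c \<in> P \<and> (\<forall>p\<in>P. norm c \<le> norm p)) = c"
    using c unique by (rule the_equality)
  then show "nearest_to_origin P = c"
    using \<open>has_unique_nearest P\<close> unfolding nearest_to_origin_def has_unique_nearest_def by simp
qed

lemma has_unique_nearestD:
  assumes "has_unique_nearest P"
  shows "nearest_to_origin P \<in> P" "\<And>p. p \<in> P \<Longrightarrow> norm (nearest_to_origin P) \<le> norm p"
    "\<And>c'. c' \<in> P \<Longrightarrow> norm c' \<le> norm (nearest_to_origin P) \<Longrightarrow> c' = nearest_to_origin P"
proof -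
  obtain c where c: "c \<in> P" "\<forall>p\<in>P. norm c \<le> norm p"
    and unique: "\<And>c'. c' \<in> P \<and> (\<forall>p\<in>P. norm c' \<le> norm p) \<Longrightarrow> c' = c"
    using assms unfolding has_unique_nearest_def by blast
  have unique': "c' = c" if "c' \<in> P" "norm c' \<le> norm c" for c'
    using that c by (intro unique) force
  have "nearest_to_origin P = c"
    using c unique' by (intro nearest_to_origin_eqI) auto
  then show "nearest_to_origin P \<in> P" "\<And>p. p \<in> P \<Longrightarrow> norm (nearest_to_origin P) \<le> norm p"
    "\<And>c'. c' \<in> P \<Longrightarrow> norm c' \<le> norm (nearest_to_origin P) \<Longrightarrow> c' = nearest_to_origin P"
    using c unique' by auto
qed

lemma nearest_to_origin_default: "\<not> has_unique_nearest P \<Longrightarrow> nearest_to_origin P = (0, 0)"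
  unfolding nearest_to_origin_def has_unique_nearest_def by simp

lemma nearest_to_origin_cball_singleton:
  assumes c: "P \<inter> cball 0 q = {c}"
  shows "has_unique_nearest P" "nearest_to_origin P = c"
proof -
  have "c \<in> P" "norm c \<le> q"
    using c by auto
  have le: "norm c \<le> norm p" if "p \<in> P" for p
  proof (cases "norm p \<le> q")
    case True
    then have "p \<in> P \<inter> cball 0 q"
      using that by (simp add: dist_norm)
    then show ?thesis
      using c by simp
  qed (use \<open>norm c \<le> q\<close> in simp)
  have unique: "c' = c" if "c' \<in> P" "norm c' \<le> norm c" for c'
  proof -
    have "c' \<in> P \<inter> cball 0 q"
      using that \<open>norm c \<le> q\<close> by (simp add: dist_norm)
    then show ?thesis
      using c by simp
  qed
  show "has_unique_nearest P" "nearest_to_origin P = c"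
    using nearest_to_origin_eqI[OF \<open>c \<in> P\<close> le unique] by simp_all
qed

lemma has_unique_nearest_cball_singleton:
  assumes locally_finite: "\<And>B. bounded B \<Longrightarrow> finite (P \<inter> B)" and "has_unique_nearest P"
  obtains q where "q \<in> \<rat>" "P \<inter> cball 0 q = {nearest_to_origin P}"
proof -
  define c where "c = nearest_to_origin P"
  note c = has_unique_nearestD[OF \<open>has_unique_nearest P\<close>, folded c_def]
  define F where "F = P \<inter> cball 0 (norm c + 1) - {c}"
  have "finite F"
    unfolding F_def using locally_finite by simp
  define r where "r = Min (insert (norm c + 1) (norm ` F))"
  have "norm c < r"
  proof -
    have "norm c < norm p" if "p \<in> F" for p
      using that c(2)[of p] c(3)[of p] unfolding F_def by (cases "norm p \<le> norm c") auto
    then show ?thesis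
      unfolding r_def using \<open>finite F\<close> by simp
  qed
  then obtain q where q: "q \<in> \<rat>" "norm c < q" "q < r"
    using Rats_dense_in_real by blast
  have "r \<le> norm c + 1" and r_le: "\<And>p. p \<in> F \<Longrightarrow> r \<le> norm p"
    unfolding r_def using \<open>finite F\<close> by auto
  have "P \<inter> cball 0 q \<subseteq> {c}"
  proof
    fix p assume p: "p \<in> P \<inter> cball 0 q"
    then have "norm p \<le> q"
      by (simp add: dist_norm)
    show "p \<in> {c}"
    proof (rule ccontr)
      assume "p \<notin> {c}"
      then have "p \<in> F"
        using p \<open>norm p \<le> q\<close> q \<open>r \<le> norm c + 1\<close> unfolding F_def by (simp add: dist_norm)
      then show False
        using r_le \<open>norm p \<le> q\<close> q by fastforce
    qed
  qed
  moreover have "c \<in> P \<inter> cball 0 q"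
    using c(1) q by (simp add: dist_norm)
  ultimately show ?thesis
    using that q(1) unfolding c_def by blast
qed

text \<open>This characterisation by counts in countably many bounded sets makes the event
  measurable.\<close>

lemma has_unique_nearest_in_iff:
  assumes "\<And>B. bounded B \<Longrightarrow> finite (P \<inter> B)"
  shows "has_unique_nearest P \<and> nearest_to_origin P \<in> U \<longleftrightarrow>
    (\<exists>q\<in>\<rat>. card (P \<inter> cball 0 q) = 1 \<and> card (P \<inter> (cball 0 q \<inter> U)) = 1)"
proof
  assume "\<exists>q\<in>\<rat>. card (P \<inter> cball 0 q) = 1 \<and> card (P \<inter> (cball 0 q \<inter> U)) = 1"
  then obtain q where count: "card (P \<inter> cball 0 q) = 1"
    and U_count: "card (P \<inter> (cball 0 q \<inter> U)) = 1"
    by blast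
  from count obtain c where c: "P \<inter> cball 0 q = {c}"
    by (rule card_1_singletonE)
  have "P \<inter> (cball 0 q \<inter> U) = {c} \<inter> U"
    using c by blast
  then have "c \<in> U"
    using U_count by (cases "c \<in> U") auto
  then show "has_unique_nearest P \<and> nearest_to_origin P \<in> U"
    using nearest_to_origin_cball_singleton[OF c] by simp
next
  assume nearest: "has_unique_nearest P \<and> nearest_to_origin P \<in> U"
  then obtain q where q: "q \<in> \<rat>" "P \<inter> cball 0 q = {nearest_to_origin P}"
    using has_unique_nearest_cball_singleton assms by blast
  moreover have "P \<inter> (cball 0 q \<inter> U) = {nearest_to_origin P}"
    using q(2) nearest by blast
  ultimately show "\<exists>q\<in>\<rat>. card (P \<inter> cball 0 q) = 1 \<and> card (P \<inter> (cball 0 q \<inter> U)) = 1"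
    by (intro bexI[of _ q]) simp_all
qed

lemma not_has_unique_nearest_tie:
  assumes fin: "finite (P \<inter> B)" and nonempty: "P \<inter> B \<noteq> {}" and "\<not> has_unique_nearest P"
    and B_lower: "\<And>b p. b \<in> B \<Longrightarrow> p \<notin> B \<Longrightarrow> norm b < norm p"
  obtains c c' where "c \<in> P \<inter> B" "c' \<in> P" "c' \<noteq> c" "norm c' = norm c"
proof -
  define m where "m = Min (norm ` (P \<inter> B))"
  have "m \<in> norm ` (P \<inter> B)"
    unfolding m_def using fin nonempty by (intro Min_in) auto
  then obtain c where c: "c \<in> P \<inter> B" "norm c = m"
    by auto
  have c_le: "norm c \<le> norm p" if "p \<in> P" for p
  proof (cases "p \<in> B")
    case True
    then show ?thesis
      unfolding c(2) m_def using fin that by (intro Min_le) auto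
  qed (use B_lower[of c p] c(1) in simp)
  have "\<exists>c'. c' \<in> P \<and> norm c' \<le> norm c \<and> c' \<noteq> c"
  proof (rule ccontr)
    assume "\<nexists>c'. c' \<in> P \<and> norm c' \<le> norm c \<and> c' \<noteq> c"
    then have "has_unique_nearest P"
      using c(1) c_le by (intro nearest_to_origin_eqI(1)) auto
    with \<open>\<not> has_unique_nearest P\<close> show False ..
  qed
  then obtain c' where "c' \<in> P" "norm c' \<le> norm c" "c' \<noteq> c"
    by blast
  moreover have "norm c \<le> norm c'"
    using c_le \<open>c' \<in> P\<close> .
  ultimately show ?thesis
    using that[OF c(1)] by simp
qed

definition disc :: "real \<Rightarrow> (real \<times> real) set" where
  "disc r = {c. (norm c)^2 < r}"

definition annulus :: "real \<Rightarrow> nat \<Rightarrow> (real \<times> real) set" where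
  "annulus h k = {c. real k * h \<le> (norm c)^2 \<and> (norm c)^2 < real (Suc k) * h}"

lemma disc_eq_ball: "disc r = (if 0 \<le> r then ball 0 (sqrt r) else {})"
proof (cases "0 \<le> r")
  case True
  have "(norm c)^2 < r \<longleftrightarrow> norm c < sqrt r" for c :: "real \<times> real"
    using True real_sqrt_less_iff[of "(norm c)^2" r] by simp
  then show ?thesis
    using True by (auto simp: disc_def dist_0_norm)
next
  case False
  then show ?thesis
  proof -
    have "\<not> (norm c)^2 < r" for c :: "real \<times> real"
      using False zero_le_power2[of "norm c"] by linarith
    then show ?thesis
      using False unfolding disc_def by auto
  qed
qed

lemma disc_sets [measurable]: "disc r \<in> sets borel"
  and bounded_disc: "bounded (disc r)"
  unfolding disc_eq_ball by auto

lemma emeasure_disc: "0 \<le> r \<Longrightarrow> emeasure lborel (disc r) = ennreal (pi * r)"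
  by (simp add: disc_eq_ball emeasure_ball unit_ball_vol_2)

lemma measure_disc: "0 \<le> r \<Longrightarrow> measure lborel (disc r) = pi * r"
  by (simp add: measure_def emeasure_disc)

lemma annulus_eq_diff: "0 \<le> h \<Longrightarrow> annulus h k = disc (real (Suc k) * h) - disc (real k * h)"
  unfolding annulus_def disc_def by auto

lemma annulus_sets [measurable]: "0 \<le> h \<Longrightarrow> annulus h k \<in> sets borel"
  and bounded_annulus: "0 \<le> h \<Longrightarrow> bounded (annulus h k)"
  using bounded_disc by (auto simp: annulus_eq_diff intro: bounded_subset[of "disc (real (Suc k) * h)"])

lemma measure_annulus: "0 \<le> h \<Longrightarrow> measure lborel (annulus h k) = pi * h"
proof -
  assume h: "0 \<le> h"
  have "disc (real k * h) \<subseteq> disc (real (Suc k) * h)"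
  proof -
    have "real k * h \<le> real (Suc k) * h"
      using h by (intro mult_right_mono) auto
    then show ?thesis
      unfolding disc_def by auto
  qed
  then have "measure lborel (annulus h k) =
      measure lborel (disc (real (Suc k) * h)) - measure lborel (disc (real k * h))"
    unfolding annulus_eq_diff[OF h]
    using h by (intro measure_Diff) (auto simp: emeasure_disc)
  also have "\<dots> = pi * h"
    using h by (simp add: measure_disc algebra_simps)
  finally show ?thesis .
qed

lemma in_annulus_floor: "0 < h \<Longrightarrow> c \<in> annulus h (nat \<lfloor>(norm c)^2 / h\<rfloor>)"
proof -
  assume h: "0 < h"
  define x where "x = (norm c)^2 / h"
  have "real (nat \<lfloor>x\<rfloor>) = of_int \<lfloor>x\<rfloor>"
    unfolding x_def using h by simp
  then have "real (nat \<lfloor>x\<rfloor>) * h \<le> x * h" "x * h < real (Suc (nat \<lfloor>x\<rfloor>)) * h"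
    using h by (simp_all add: mult_right_mono) linarith
  moreover have "x * h = (norm c)^2"
    unfolding x_def using h by simp
  ultimately show ?thesis
    unfolding annulus_def x_def by simp
qed

lemma disjoint_family_annulus:
  assumes h: "0 < h"
  shows "disjoint_family (annulus h)"
  unfolding disjoint_family_on_def
proof (intro ballI impI)
  fix i j :: nat assume "i \<noteq> j"
  show "annulus h i \<inter> annulus h j = {}"
  proof (rule ccontr)
    assume "annulus h i \<inter> annulus h j \<noteq> {}"
    then have "real i * h < real (Suc j) * h" "real j * h < real (Suc i) * h"
      unfolding annulus_def by auto
    then have "i < Suc j" "j < Suc i"
      using h by (simp_all add: mult_less_cancel_right)
    with \<open>i \<noteq> j\<close> show False
      by simp
  qed
qed

lemma one_minus_exp_minus_le_sq: "0 \<le> (x::real) \<Longrightarrow> 1 - exp (- x) - x * exp (- x) \<le> x^2"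
proof -
  assume x: "0 \<le> x"
  have "1 - x \<le> exp (- x)"
    using exp_ge_add_one_self[of "- x"] by simp
  then have "(1 - x) * (1 + x) \<le> exp (- x) * (1 + x)"
    using x by (intro mult_right_mono) auto
  then show ?thesis
    by (simp add: algebra_simps power2_eq_square)
qed

section \<open>The nearest point of a unit Poisson process\<close>

locale unit_ppp =
  fixes M :: "'w measure" and Pts :: "'w \<Rightarrow> (real \<times> real) set"
  assumes unit_ppp: "unit_poisson_point_process M Pts"
begin

sublocale prob_space M
  using unit_ppp unfolding unit_poisson_point_process_def by blast

lemma locally_finite: "\<omega> \<in> space M \<Longrightarrow> bounded B \<Longrightarrow> finite (Pts \<omega> \<inter> B)"
  using unit_ppp unfolding unit_poisson_point_process_def by blast

lemma count_event_sets:
  assumes "B \<in> sets borel" "bounded B"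
  shows "{\<omega> \<in> space M. Q (card (Pts \<omega> \<inter> B))} \<in> events"
proof -
  have "(\<lambda>\<omega>. card (Pts \<omega> \<inter> B)) \<in> measurable M (count_space UNIV)"
    using unit_ppp assms unfolding unit_poisson_point_process_def by simp
  then have "(\<lambda>\<omega>. card (Pts \<omega> \<inter> B)) -` {n. Q n} \<inter> space M \<in> events"
    by (rule measurable_sets) simp
  then show ?thesis
    by (simp add: vimage_def Int_def conj_commute)
qed

lemma prob_count:
  "B \<in> sets borel \<Longrightarrow> bounded B \<Longrightarrow>
   prob {\<omega> \<in> space M. card (Pts \<omega> \<inter> B) = k} = measure lborel B ^ k / fact k * exp (- measure lborel B)"
  using unit_ppp unfolding unit_poisson_point_process_def by simp

lemma prob_void:
  "B \<in> sets borel \<Longrightarrow> bounded B \<Longrightarrow> prob {\<omega> \<in> space M. card (Pts \<omega> \<inter> B) = 0} = exp (- measure lborel B)"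
  using prob_count[of B 0] by simp

lemma prob_nonvoid:
  assumes "B \<in> sets borel" "bounded B"
  shows "prob {\<omega> \<in> space M. card (Pts \<omega> \<inter> B) \<noteq> 0} = 1 - exp (- measure lborel B)"
proof -
  have "{\<omega> \<in> space M. card (Pts \<omega> \<inter> B) \<noteq> 0} = space M - {\<omega> \<in> space M. card (Pts \<omega> \<inter> B) = 0}"
    by auto
  then show ?thesis
    using prob_compl[OF count_event_sets[OF assms, of "\<lambda>n. n = 0"]] prob_void[OF assms] by simp
qed

lemma prob_void_nonvoid:
  assumes B1: "B1 \<in> sets borel" "bounded B1" and B2: "B2 \<in> sets borel" "bounded B2"
    and disjoint: "B1 \<inter> B2 = {}"
  shows "prob {\<omega> \<in> space M. card (Pts \<omega> \<inter> B1) = 0 \<and> card (Pts \<omega> \<inter> B2) \<noteq> 0}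
       = exp (- measure lborel B1) * (1 - exp (- measure lborel B2))"
proof -
  define Bs where "Bs i = (if i = (0::nat) then B1 else B2)" for i
  define A where "A i = (if i = (0::nat) then {0::nat} else - {0})" for i
  have "disjoint_family_on Bs {0, 1}"
    unfolding disjoint_family_on_def Bs_def using disjoint by auto
  then have indep: "indep_vars (\<lambda>_. count_space UNIV) (\<lambda>i \<omega>. card (Pts \<omega> \<inter> Bs i)) {0, 1}"
    using unit_ppp B1 B2 unfolding unit_poisson_point_process_def Bs_def by auto
  have "prob (\<Inter>i\<in>{0,1}. (\<lambda>\<omega>. card (Pts \<omega> \<inter> Bs i)) -` A i \<inter> space M)
      = (\<Prod>i\<in>{0,1}. prob ((\<lambda>\<omega>. card (Pts \<omega> \<inter> Bs i)) -` A i \<inter> space M))"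
    by (rule indep_varsD[OF indep]) auto
  moreover have "(\<Inter>i\<in>{0::nat,1}. (\<lambda>\<omega>. card (Pts \<omega> \<inter> Bs i)) -` A i \<inter> space M)
      = {\<omega> \<in> space M. card (Pts \<omega> \<inter> B1) = 0 \<and> card (Pts \<omega> \<inter> B2) \<noteq> 0}"
    by (auto simp: A_def Bs_def)
  moreover have "(\<lambda>\<omega>. card (Pts \<omega> \<inter> Bs 0)) -` A 0 \<inter> space M = {\<omega> \<in> space M. card (Pts \<omega> \<inter> B1) = 0}"
    and "(\<lambda>\<omega>. card (Pts \<omega> \<inter> Bs 1)) -` A 1 \<inter> space M = {\<omega> \<in> space M. card (Pts \<omega> \<inter> B2) \<noteq> 0}"
    by (auto simp: A_def Bs_def)
  ultimately show ?thesis
    using prob_void[OF B1] prob_nonvoid[OF B2] by simp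
qed

definition nearest_event :: "(real \<times> real) set \<Rightarrow> 'w set" where
  "nearest_event U = {\<omega> \<in> space M. has_unique_nearest (Pts \<omega>) \<and> nearest_to_origin (Pts \<omega>) \<in> U}"

lemma nearest_event_sets:
  assumes U: "U \<in> sets borel"
  shows "nearest_event U \<in> events"
proof -
  have "nearest_event U = (\<Union>q\<in>\<rat>. {\<omega> \<in> space M. card (Pts \<omega> \<inter> cball 0 q) = 1} \<inter>
      {\<omega> \<in> space M. card (Pts \<omega> \<inter> (cball 0 q \<inter> U)) = 1})"
    unfolding nearest_event_def using has_unique_nearest_in_iff[OF locally_finite] by blast
  also have "\<dots> \<in> events"
  proof (rule sets.countable_UN''[OF countable_rat])
    fix q :: real
    have "cball (0::real\<times>real) q \<inter> U \<in> sets borel" "bounded (cball (0::real\<times>real) q \<inter> U)"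
      using U by auto
    then show "{\<omega> \<in> space M. card (Pts \<omega> \<inter> cball 0 q) = 1} \<inter>
        {\<omega> \<in> space M. card (Pts \<omega> \<inter> (cball 0 q \<inter> U)) = 1} \<in> events"
      using count_event_sets[of "cball 0 q" "\<lambda>n. n = 1"] count_event_sets[of _ "\<lambda>n. n = 1"] by auto
  qed
  finally show ?thesis .
qed

lemma measurable_nearest: "(\<lambda>\<omega>. nearest_to_origin (Pts \<omega>)) \<in> measurable M borel"
proof (rule measurableI)
  fix A :: "(real \<times> real) set" assume A: "A \<in> sets borel"
  have "(\<lambda>\<omega>. nearest_to_origin (Pts \<omega>)) -` A \<inter> space M =
      nearest_event A \<union> (if (0, 0) \<in> A then space M - nearest_event UNIV else {})"
  proof (rule set_eqI)
    fix \<omega>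
    show "\<omega> \<in> (\<lambda>\<omega>. nearest_to_origin (Pts \<omega>)) -` A \<inter> space M \<longleftrightarrow>
        \<omega> \<in> nearest_event A \<union> (if (0, 0) \<in> A then space M - nearest_event UNIV else {})"
      using nearest_to_origin_default[of "Pts \<omega>"]
      by (cases "has_unique_nearest (Pts \<omega>)") (auto simp: nearest_event_def)
  qed
  also have "\<dots> \<in> events"
    using nearest_event_sets[OF A] nearest_event_sets[of UNIV] by auto
  finally show "(\<lambda>\<omega>. nearest_to_origin (Pts \<omega>)) -` A \<inter> space M \<in> events" .
qed simp

lemma prob_two_points_annulus:
  assumes h: "0 \<le> h"
  shows "prob {\<omega> \<in> space M. 2 \<le> card (Pts \<omega> \<inter> annulus h k)} \<le> (pi * h)^2"
proof -
  define B where "B = annulus h k"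
  have B: "B \<in> sets borel" "bounded B"
    unfolding B_def using h by (auto intro: bounded_annulus)
  have area: "measure lborel B = pi * h"
    unfolding B_def using h by (rule measure_annulus)
  define S0 where "S0 = {\<omega> \<in> space M. card (Pts \<omega> \<inter> B) = 0}"
  define S1 where "S1 = {\<omega> \<in> space M. card (Pts \<omega> \<inter> B) = 1}"
  have S0: "S0 \<in> events" and S1: "S1 \<in> events"
    unfolding S0_def S1_def using B by (auto intro: count_event_sets)
  have probs: "prob S0 = exp (- (pi * h))" "prob S1 = pi * h * exp (- (pi * h))"
    using prob_void[OF B] prob_count[OF B, of 1] area by (simp_all add: S0_def S1_def)
  have "{\<omega> \<in> space M. 2 \<le> card (Pts \<omega> \<inter> B)} = space M - (S0 \<union> S1)"
    unfolding S0_def S1_def by auto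
  then have "prob {\<omega> \<in> space M. 2 \<le> card (Pts \<omega> \<inter> B)} = 1 - prob (S0 \<union> S1)"
    using prob_compl[of "S0 \<union> S1"] S0 S1 by auto
  also have "prob (S0 \<union> S1) = prob S0 + prob S1"
    using S0 S1 by (intro finite_measure_Union) (auto simp: S0_def S1_def)
  also have "1 - (prob S0 + prob S1) = 1 - exp (- (pi * h)) - pi * h * exp (- (pi * h))"
    using probs by simp
  also have "\<dots> \<le> (pi * h)^2"
    using h by (intro one_minus_exp_minus_le_sq) simp
  finally show ?thesis
    unfolding B_def .
qed

lemma not_has_unique_nearest_subset:
  assumes h: "0 < h"
  shows "space M - nearest_event UNIV \<subseteq> {\<omega> \<in> space M. card (Pts \<omega> \<inter> disc (real K * h)) = 0} \<union>
      (\<Union>k<K. {\<omega> \<in> space M. 2 \<le> card (Pts \<omega> \<inter> annulus h k)})"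
proof
  fix \<omega> assume \<omega>: "\<omega> \<in> space M - nearest_event UNIV"
  show "\<omega> \<in> {\<omega> \<in> space M. card (Pts \<omega> \<inter> disc (real K * h)) = 0} \<union>
      (\<Union>k<K. {\<omega> \<in> space M. 2 \<le> card (Pts \<omega> \<inter> annulus h k)})"
  proof (cases "card (Pts \<omega> \<inter> disc (real K * h)) = 0")
    case False
    have fin: "finite (Pts \<omega> \<inter> disc (real K * h))"
      using \<omega> bounded_disc by (auto intro: locally_finite)
    have nonempty: "Pts \<omega> \<inter> disc (real K * h) \<noteq> {}"
      using False by auto
    have not_unique: "\<not> has_unique_nearest (Pts \<omega>)"
      using \<omega> by (simp add: nearest_event_def)
    have lower: "norm b < norm p"
      if "b \<in> disc (real K * h)" "p \<notin> disc (real K * h)" for b p :: "real \<times> real"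
    proof (rule power_less_imp_less_base)
      show "(norm b)^2 < (norm p)^2"
        using that unfolding disc_def by simp
    qed simp
    obtain c c' where c: "c \<in> Pts \<omega> \<inter> disc (real K * h)" "c' \<in> Pts \<omega>" "c' \<noteq> c"
      and tie: "norm c' = norm c"
      using fin nonempty not_unique lower by (rule not_has_unique_nearest_tie)
    define k where "k = nat \<lfloor>(norm c)^2 / h\<rfloor>"
    have c_ann: "c \<in> annulus h k" and c'_ann: "c' \<in> annulus h k"
      unfolding k_def using in_annulus_floor[OF h, of c] in_annulus_floor[OF h, of c'] tie by simp_all
    then have "{c, c'} \<subseteq> Pts \<omega> \<inter> annulus h k"
      using c(1,2) by blast
    moreover have "finite (Pts \<omega> \<inter> annulus h k)"
      using \<omega> h bounded_annulus by (auto intro: locally_finite)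
    ultimately have "2 \<le> card (Pts \<omega> \<inter> annulus h k)"
      using c(3) card_mono[of "Pts \<omega> \<inter> annulus h k" "{c, c'}"] by simp
    moreover have "real k * h < real K * h"
      using c(1) c_ann unfolding annulus_def disc_def by simp
    then have "k < K"
      using h by simp
    ultimately show ?thesis
      using \<omega> by blast
  qed (use \<omega> in simp)
qed

text \<open>Cutting the disc of area \<open>pi n\<close> into \<open>n^3\<close> annuli of area \<open>pi / n^2\<close>: the disc is empty
  with probability \<open>exp (- pi n)\<close>, and a tie needs two points in one annulus, which has total
  probability at most \<open>n^3 (pi / n^2)^2 = pi^2 / n\<close>.\<close>

lemma prob_not_has_unique_nearest_le:
  assumes n: "0 < n"
  shows "prob (space M - nearest_event UNIV) \<le> (1 + pi^2) / real n"
proof -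
  define h where "h = 1 / (real n)^2"
  define K where "K = n^3"
  have h: "0 < h"
    unfolding h_def using n by simp
  have Kh: "real K * h = real n"
    unfolding K_def h_def using n by (simp add: power2_eq_square power3_eq_cube)
  have void_sets: "{\<omega> \<in> space M. card (Pts \<omega> \<inter> disc (real K * h)) = 0} \<in> events"
    using bounded_disc by (intro count_event_sets) auto
  have tie_sets: "{\<omega> \<in> space M. 2 \<le> card (Pts \<omega> \<inter> annulus h k)} \<in> events" for k
    using h bounded_annulus by (intro count_event_sets) auto
  have "prob (space M - nearest_event UNIV) \<le>
      prob ({\<omega> \<in> space M. card (Pts \<omega> \<inter> disc (real K * h)) = 0} \<union>
        (\<Union>k<K. {\<omega> \<in> space M. 2 \<le> card (Pts \<omega> \<inter> annulus h k)}))"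
    using not_has_unique_nearest_subset[OF h, of K] void_sets tie_sets by (intro finite_measure_mono) auto
  also have "\<dots> \<le> prob {\<omega> \<in> space M. card (Pts \<omega> \<inter> disc (real K * h)) = 0} +
      prob (\<Union>k<K. {\<omega> \<in> space M. 2 \<le> card (Pts \<omega> \<inter> annulus h k)})"
    using void_sets tie_sets by (intro measure_Un_le) auto
  also have "prob (\<Union>k<K. {\<omega> \<in> space M. 2 \<le> card (Pts \<omega> \<inter> annulus h k)}) \<le>
      (\<Sum>k<K. prob {\<omega> \<in> space M. 2 \<le> card (Pts \<omega> \<inter> annulus h k)})"
    using tie_sets by (intro measure_UNION_le) auto
  also have "\<dots> \<le> (\<Sum>k<K. (pi * h)^2)"
    using h by (intro sum_mono prob_two_points_annulus) auto
  also have "prob {\<omega> \<in> space M. card (Pts \<omega> \<inter> disc (real K * h)) = 0} = exp (- (pi * real n))"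
    using prob_void[of "disc (real K * h)"] bounded_disc measure_disc[of "real K * h"] h Kh by simp
  also have "(\<Sum>k<K. (pi * h)^2) = pi^2 / real n"
    unfolding K_def h_def using n by (simp add: power2_eq_square power3_eq_cube field_simps)
  also have "exp (- (pi * real n)) \<le> 1 / real n"
  proof -
    have "real n \<le> 1 + pi * real n"
      using mult_right_mono[of 1 pi "real n"] pi_gt3 by simp
    also have "\<dots> \<le> exp (pi * real n)"
      by (rule exp_ge_add_one_self)
    finally show ?thesis
      using n by (simp add: exp_minus field_simps)
  qed
  finally show ?thesis
    by (simp add: add_divide_distrib)
qed

lemma prob_has_unique_nearest: "prob (nearest_event UNIV) = 1"
proof -
  have "prob (space M - nearest_event UNIV) \<le> 0"
  proof (rule LIMSEQ_le_const)
    show "(\<lambda>n. (1 + pi^2) / real n) \<longlonglongrightarrow> 0"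
      by (rule lim_const_over_n)
    show "\<exists>N. \<forall>n\<ge>N. prob (space M - nearest_event UNIV) \<le> (1 + pi^2) / real n"
      using prob_not_has_unique_nearest_le by (intro exI[of _ 1]) auto
  qed
  then show ?thesis
    using prob_compl[OF nearest_event_sets[of UNIV]] prob_le_1[of "nearest_event UNIV"] by simp
qed

lemma nearest_event_annulus_subset:
  assumes h: "0 < h"
  shows "nearest_event (U \<inter> annulus h k) \<subseteq>
     {\<omega> \<in> space M. card (Pts \<omega> \<inter> disc (real k * h)) = 0 \<and> card (Pts \<omega> \<inter> (U \<inter> annulus h k)) \<noteq> 0}"
proof
  fix \<omega> assume \<omega>: "\<omega> \<in> nearest_event (U \<inter> annulus h k)"
  define c where "c = nearest_to_origin (Pts \<omega>)"
  have c: "c \<in> Pts \<omega>" "c \<in> U \<inter> annulus h k" "\<And>p. p \<in> Pts \<omega> \<Longrightarrow> norm c \<le> norm p"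
    using \<omega> has_unique_nearestD[of "Pts \<omega>"] unfolding nearest_event_def c_def by auto
  have "Pts \<omega> \<inter> disc (real k * h) = {}"
  proof (rule ccontr)
    assume "Pts \<omega> \<inter> disc (real k * h) \<noteq> {}"
    then obtain p where p: "p \<in> Pts \<omega>" "(norm p)^2 < real k * h"
      unfolding disc_def by auto
    have "(norm c)^2 \<le> (norm p)^2"
      using c(3)[OF p(1)] by (simp add: power_mono)
    moreover have "real k * h \<le> (norm c)^2"
      using c(2) by (simp add: annulus_def)
    ultimately show False
      using p(2) by linarith
  qed
  moreover have "finite (Pts \<omega> \<inter> (U \<inter> annulus h k))"
    using \<omega> h bounded_annulus[of h k] unfolding nearest_event_def
    by (auto intro: locally_finite bounded_subset)
  then have "card (Pts \<omega> \<inter> (U \<inter> annulus h k)) \<noteq> 0"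
    using c(1,2) by auto
  ultimately show "\<omega> \<in> {\<omega> \<in> space M. card (Pts \<omega> \<inter> disc (real k * h)) = 0 \<and>
      card (Pts \<omega> \<inter> (U \<inter> annulus h k)) \<noteq> 0}"
    using \<omega> unfolding nearest_event_def by simp
qed

text \<open>The nearest point lies in \<open>A = U \<inter> annulus h k\<close> only if the disc inside the annulus is empty
  and \<open>A\<close> is not; by independence this has probability
  \<open>exp (- pi k h) (1 - exp (- |A|)) \<le> exp (- pi k h) |A|\<close>, while the density of \<open>nearest_law\<close> is
  at least \<open>exp (- pi (k + 1) h)\<close> on \<open>A\<close>.\<close>

lemma emeasure_nearest_event_annulus_le:
  assumes U: "U \<in> sets borel" and h: "0 < h"
  shows "emeasure M (nearest_event (U \<inter> annulus h k)) \<le>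
      ennreal (exp (pi * h)) * emeasure nearest_law (U \<inter> annulus h k)"
proof -
  define A where "A = U \<inter> annulus h k"
  have A: "A \<in> sets borel" "bounded A"
    unfolding A_def using U h bounded_annulus[of h k] by (auto intro: bounded_subset)
  have disc: "disc (real k * h) \<in> sets borel" "bounded (disc (real k * h))"
    using bounded_disc by auto
  have disjoint: "disc (real k * h) \<inter> A = {}"
    unfolding A_def annulus_def disc_def by auto
  define x where "x = measure lborel A"
  have "emeasure lborel A = ennreal x"
    unfolding x_def using emeasure_bounded_finite[OF A(2)] by (intro emeasure_eq_ennreal_measure) auto
  have "{\<omega> \<in> space M. card (Pts \<omega> \<inter> disc (real k * h)) = 0 \<and> card (Pts \<omega> \<inter> A) \<noteq> 0} =
      {\<omega> \<in> space M. card (Pts \<omega> \<inter> disc (real k * h)) = 0} \<inter> {\<omega> \<in> space M. card (Pts \<omega> \<inter> A) \<noteq> 0}"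
    by auto
  then have event: "{\<omega> \<in> space M. card (Pts \<omega> \<inter> disc (real k * h)) = 0 \<and> card (Pts \<omega> \<inter> A) \<noteq> 0} \<in> events"
    using count_event_sets[OF disc, of "\<lambda>n. n = 0"] count_event_sets[OF A, of "\<lambda>n. n \<noteq> 0"] by auto
  have "emeasure M (nearest_event A) \<le>
      emeasure M {\<omega> \<in> space M. card (Pts \<omega> \<inter> disc (real k * h)) = 0 \<and> card (Pts \<omega> \<inter> A) \<noteq> 0}"
    using nearest_event_annulus_subset[OF h, of U k] event unfolding A_def by (intro emeasure_mono) auto
  also have "\<dots> = ennreal (exp (- (pi * (real k * h))) * (1 - exp (- x)))"
    using prob_void_nonvoid[OF disc A disjoint] measure_disc[of "real k * h"] h
    unfolding x_def by (simp add: emeasure_eq_measure)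
  also have "\<dots> \<le> ennreal (exp (- (pi * (real k * h))) * x)"
    using exp_ge_add_one_self[of "- x"] by (intro ennreal_leI mult_left_mono) auto
  also have "exp (- (pi * (real k * h))) * x = exp (pi * h) * (exp (- pi * (real (Suc k) * h)) * x)"
  proof -
    have "exp (pi * h) * exp (- pi * (real (Suc k) * h)) = exp (- (pi * (real k * h)))"
      by (simp add: exp_add[symmetric] algebra_simps)
    then show ?thesis
      by (metis mult.assoc)
  qed
  also have "ennreal \<dots> = ennreal (exp (pi * h)) * (ennreal (exp (- pi * (real (Suc k) * h))) * emeasure lborel A)"
    using \<open>emeasure lborel A = ennreal x\<close> x_def by (simp add: ennreal_mult')
  also have "\<dots> \<le> ennreal (exp (pi * h)) * emeasure nearest_law A"
    using A(1) by (intro mult_left_mono emeasure_nearest_law_ge) (auto simp: A_def annulus_def)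
  finally show ?thesis
    unfolding A_def .
qed

lemma emeasure_nearest_event_le:
  assumes U: "U \<in> sets borel" and h: "0 < h"
  shows "emeasure M (nearest_event U) \<le> ennreal (exp (pi * h)) * emeasure nearest_law U"
proof -
  define A where "A k = U \<inter> annulus h k" for k
  have A_sets: "A k \<in> sets borel" for k
    unfolding A_def using U h by auto
  have "disjoint_family A"
    using disjoint_family_annulus[OF h] unfolding disjoint_family_on_def A_def by blast
  moreover have U_eq: "U = (\<Union>k. A k)"
    using in_annulus_floor[OF h] unfolding A_def by blast
  moreover have "disjoint_family (\<lambda>k. nearest_event (A k))"
    using \<open>disjoint_family A\<close> unfolding disjoint_family_on_def nearest_event_def by blast
  moreover have "nearest_event U = (\<Union>k. nearest_event (A k))"
    unfolding nearest_event_def by (subst U_eq) blast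
  ultimately have "emeasure M (nearest_event U) = (\<Sum>k. emeasure M (nearest_event (A k)))"
    using nearest_event_sets[OF A_sets] by (auto intro: suminf_emeasure[symmetric])
  also have "\<dots> \<le> (\<Sum>k. ennreal (exp (pi * h)) * emeasure nearest_law (A k))"
    unfolding A_def using U h by (intro suminf_le summableI emeasure_nearest_event_annulus_le)
  also have "\<dots> = ennreal (exp (pi * h)) * (\<Sum>k. emeasure nearest_law (A k))"
    by simp
  also have "(\<Sum>k. emeasure nearest_law (A k)) = emeasure nearest_law U"
    unfolding U_eq using A_sets \<open>disjoint_family A\<close> by (intro suminf_emeasure) auto
  finally show ?thesis .
qed

lemma prob_nearest_event_le:
  assumes U: "U \<in> sets borel"
  shows "prob (nearest_event U) \<le> measure nearest_law U"
proof (rule field_le_epsilon)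
  interpret law: prob_space nearest_law
    by (rule prob_space_nearest_law)
  fix e :: real assume e: "0 < e"
  define h where "h = ln (1 + e) / pi"
  have h: "0 < h" and exp_h: "exp (pi * h) = 1 + e"
    unfolding h_def using e by simp_all
  have "ennreal (prob (nearest_event U)) \<le> ennreal (exp (pi * h)) * ennreal (law.prob U)"
    using emeasure_nearest_event_le[OF U h] by (simp add: emeasure_eq_measure law.emeasure_eq_measure)
  also have "\<dots> = ennreal ((1 + e) * law.prob U)"
    unfolding exp_h using e by (simp add: ennreal_mult')
  finally have "prob (nearest_event U) \<le> (1 + e) * law.prob U"
    using e by (simp add: ennreal_le_iff)
  also have "\<dots> \<le> law.prob U + e"
    using e law.prob_le_1[of U] by (simp add: algebra_simps)
  finally show "prob (nearest_event U) \<le> law.prob U + e" .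
qed

text \<open>Both \<open>U\<close> and its complement obey the upper bound, and the two probabilities add up to \<open>1\<close>
  on both sides.\<close>

lemma prob_nearest_event_eq:
  assumes U: "U \<in> sets borel"
  shows "prob (nearest_event U) = measure nearest_law U"
proof -
  interpret law: prob_space nearest_law
    by (rule prob_space_nearest_law)
  have U': "- U \<in> sets borel"
    using U by auto
  have "nearest_event U \<union> nearest_event (- U) = nearest_event UNIV"
    unfolding nearest_event_def by auto
  then have "prob (nearest_event U) + prob (nearest_event (- U)) = 1"
    using nearest_event_sets[OF U] nearest_event_sets[OF U'] prob_has_unique_nearest
    by (subst finite_measure_Union[symmetric]) (auto simp: nearest_event_def)
  moreover have "law.prob U + law.prob (- U) = 1"
    using law.prob_compl[of U] U by (simp add: nearest_law_def Compl_eq_Diff_UNIV)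
  ultimately show ?thesis
    using prob_nearest_event_le[OF U] prob_nearest_event_le[OF U'] by linarith
qed

lemma distr_nearest: "distr M lborel (\<lambda>\<omega>. nearest_to_origin (Pts \<omega>)) = nearest_law"
proof (rule measure_eqI)
  interpret law: prob_space nearest_law
    by (rule prob_space_nearest_law)
  fix A assume "A \<in> sets (distr M lborel (\<lambda>\<omega>. nearest_to_origin (Pts \<omega>)))"
  then have A: "A \<in> sets borel"
    by simp
  define C where "C = (\<lambda>\<omega>. nearest_to_origin (Pts \<omega>))"
  have C_meas: "C \<in> measurable M lborel"
    unfolding C_def using measurable_nearest by simp
  have null: "prob (space M - nearest_event UNIV) = 0"
    using prob_compl[OF nearest_event_sets[of UNIV]] prob_has_unique_nearest by simp
  have "prob (nearest_event A) \<le> prob (C -` A \<inter> space M)"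
    using measurable_sets[OF C_meas, of A] A
    by (intro finite_measure_mono) (auto simp: nearest_event_def C_def)
  moreover have "prob (C -` A \<inter> space M) \<le> prob (nearest_event A \<union> (space M - nearest_event UNIV))"
    using nearest_event_sets[OF A] nearest_event_sets[of UNIV]
    by (intro finite_measure_mono) (auto simp: nearest_event_def C_def)
  moreover have "\<dots> \<le> prob (nearest_event A) + prob (space M - nearest_event UNIV)"
    using nearest_event_sets[OF A] nearest_event_sets[of UNIV] by (intro measure_Un_le) auto
  ultimately have "prob (C -` A \<inter> space M) = law.prob A"
    using null prob_nearest_event_eq[OF A] by linarith
  then have "emeasure M (C -` A \<inter> space M) = emeasure nearest_law A"
    by (simp add: emeasure_eq_measure law.emeasure_eq_measure)
  moreover have "emeasure (distr M lborel C) A = emeasure M (C -` A \<inter> space M)"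
    using C_meas A by (intro emeasure_distr) auto
  ultimately show "emeasure (distr M lborel (\<lambda>\<omega>. nearest_to_origin (Pts \<omega>))) A = emeasure nearest_law A"
    unfolding C_def by simp
qed simp

end

theorem mainTheorem13:
  fixes M :: "'w measure" and Pts :: "'w \<Rightarrow> (real \<times> real) set"
  assumes "unit_poisson_point_process M Pts"
  shows "distributed M lborel
     (\<lambda>\<omega>. (interior_angle (1, 0) (0, 0) (nearest_to_origin (Pts \<omega>)),
            interior_angle (0, 0) (1, 0) (nearest_to_origin (Pts \<omega>))))
     (\<lambda>(x, y). ennreal (if 0 < x \<and> 0 < y \<and> x + y < pi
        then 2 * exp (- pi * (sin x ^ 2 / sin (x + y) ^ 2)) * (sin x * sin y / sin (x + y) ^ 3)
        else 0))"
proof -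
  interpret unit_ppp M Pts
    using assms by unfold_locales
  define C where "C \<omega> = nearest_to_origin (Pts \<omega>)" for \<omega>
  have C_meas: "C \<in> measurable M lborel"
    unfolding C_def using measurable_nearest by simp
  have "distr M lborel (staked_angles \<circ> C) = distr (distr M lborel C) lborel staked_angles"
    using C_meas by (intro distr_distr[symmetric]) auto
  also have "\<dots> = density lborel (\<lambda>z. ennreal (angle_density z))"
    unfolding C_def distr_nearest distr_nearest_law_staked_angles ..
  finally have "distributed M lborel (staked_angles \<circ> C) (\<lambda>z. ennreal (angle_density z))"
    using C_meas unfolding distributed_def by auto
  then show ?thesis
    by (simp add: comp_def C_def staked_angles_def angle_density_def case_prod_beta')
qed

end
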